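(* Let $g:\mathbb{R}^n\to\mathbb{R}^n$ be convex, order-preserving and additively homogeneous. Assume that $u\in\mathbb{R}^n$ is harmonic with respect to $g$, i.e. $g(u)=u$. Let $C\subseteq[n]$ be the set of critical nodes of $g$ and $N=[n]\setminus C$. Define $h:\mathbb{R}^N\to\mathbb{R}^N$ by $h(y):=\big(g(\imath_N(y,u_C))\big)_N$, i.e. $h(y)$ is the restriction to $N$ of $g$ applied to the vector whose $N$-coordinates are $y$ and whose $C$-coordinates are those of $u$. Then $h$ has a unique fixed point.
   Context: $[n]=\{1,\dots,n\}$. A map $g:\mathbb{R}^n\to\mathbb{R}^n$ is order-preserving if $x\le y$ (coordinatewise) implies $g(x)\le g(y)$; additively homogeneous if $g(\lambda+x)=\lambda+g(x)$ for all $\lambda\in\mathbb{R}$, $x\in\mathbb{R}^n$ (where $\lambda+x$ adds $\lambda$ to each coordinate); convex if each coordinate $g_i$ is a convex function. A vector $u$ is harmonic for $g$ if $g(u)=u$ and super-harmonic if $g(u)\le u$. The subdifferential of $g$ at $u$ is $\partial g(u)=\{M\in\mathbb{R}^{n\times n}: g(x)-g(u)\ge M(x-u)\ \forall x\in\mathbb{R}^n\}$; for $g$ order-preserving and additively homogeneous its elements are stochastic matrices. For a subset $I\subseteq[n]$ and $x\in\mathbb{R}^n$, $x_I$ is the restriction of $x$ to coordinates in $I$, $M_{IJ}$ the $I\times J$ submatrix of $M$, and for $J=[n]\setminus I$, $\imath_I(y,z)$ denotes the vector of $\mathbb{R}^n$ with $I$-coordinates $y$ and $J$-coordinates $z$.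 A recurrence class of a matrix $M$ is a final communication class $F$ of $M$ (a strongly connected class of the graph of nonzero entries of $M$ with no arc leaving it) such that $M_{FF}$ is stochastic. A node $i\in[n]$ is critical for $g$ (which has harmonic vector $u$) if it belongs to a recurrence class of some $M\in\partial g(u)$; this set does not depend on the choice of the harmonic vector $u$. *)

theory Defs
  imports "HOL-Analysis.Analysis" "HOL-Library.FuncSet"
begin

definition order_preserving :: "(real^'n \<Rightarrow> real^'n) \<Rightarrow> bool" where
  "order_preserving g \<longleftrightarrow>
     (\<forall>x y. (\<forall>i. x $ i \<le> y $ i) \<longrightarrow> (\<forall>i. g x $ i \<le> g y $ i))"

definition additively_homogeneous :: "(real^'n \<Rightarrow> real^'n) \<Rightarrow> bool" where
  "additively_homogeneous g \<longleftrightarrow>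
     (\<forall>(c::real) x. g ((\<chi> i. c) + x) = (\<chi> i. c) + g x)"

definition convex_map :: "(real^'n \<Rightarrow> real^'n) \<Rightarrow> bool" where
  "convex_map g \<longleftrightarrow> (\<forall>i. convex_on UNIV (\<lambda>x. g x $ i))"

definition subdiff :: "(real^'n \<Rightarrow> real^'n) \<Rightarrow> real^'n \<Rightarrow> (real^'n^'n) set" where
  "subdiff g u = {M. \<forall>x. \<forall>i. (g x - g u) $ i \<ge> (M *v (x - u)) $ i}"

definition arcs :: "real^'n^'n \<Rightarrow> ('n \<times> 'n) set" where
  "arcs M = {(i, j). M $ i $ j \<noteq> 0}"

definition comm_class :: "real^'n^'n \<Rightarrow> 'n set \<Rightarrow> bool" where
  "comm_class M F \<longleftrightarrow>
     (\<exists>i. F = {j. (i, j) \<in> (arcs M)\<^sup>* \<and> (j, i) \<in> (arcs M)\<^sup>*})"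

definition final_class :: "real^'n^'n \<Rightarrow> 'n set \<Rightarrow> bool" where
  "final_class M F \<longleftrightarrow> comm_class M F \<and> (\<forall>i\<in>F. \<forall>j. (i, j) \<in> arcs M \<longrightarrow> j \<in> F)"

definition stochastic_on :: "real^'n^'n \<Rightarrow> 'n set \<Rightarrow> bool" where
  "stochastic_on M F \<longleftrightarrow>
     (\<forall>i\<in>F. \<forall>j\<in>F. M $ i $ j \<ge> 0) \<and> (\<forall>i\<in>F. (\<Sum>j\<in>F. M $ i $ j) = 1)"

definition recurrence_class :: "real^'n^'n \<Rightarrow> 'n set \<Rightarrow> bool" where
  "recurrence_class M F \<longleftrightarrow> final_class M F \<and> stochastic_on M F"

definition critical_nodes :: "(real^'n \<Rightarrow> real^'n) \<Rightarrow> real^'n \<Rightarrow> 'n set" where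
  "critical_nodes g u = {i. \<exists>M\<in>subdiff g u. \<exists>F. recurrence_class M F \<and> i \<in> F}"

text \<open>imath I y z: I-coordinates from y, the others from z. Elements of R^I are
  represented as extensional functions in PiE I (\<lambda>_. UNIV).\<close>
definition imath :: "'n set \<Rightarrow> ('n \<Rightarrow> real) \<Rightarrow> real^'n \<Rightarrow> real^'n" where
  "imath I y z = (\<chi> i. if i \<in> I then y i else z $ i)"

end

theory Submission
  imports Defs
begin

text \<open>Set \<open>z = x - u\<close>, where \<open>x\<close> agrees with \<open>u\<close> on the critical nodes and \<open>g x\<close>
  agrees with \<open>x\<close> elsewhere. If \<open>z\<close> had a positive maximum, the nodes where it is attained
  would be non-critical, and the subgradient inequalities at \<open>x\<close> and \<open>u\<close> would combine into
  a stochastic matrix \<open>M \<in> \<partial>g(u)\<close> under which this set is closed; but every nonempty closed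
  set of a stochastic matrix contains a recurrence class, hence a critical node. A negative
  minimum of \<open>z\<close> is excluded in the same way, using any \<open>M \<in> \<partial>g(u)\<close>. So \<open>x = u\<close>, and
  the restriction of \<open>u\<close> to the non-critical nodes is the only fixed point of \<open>h\<close>.\<close>

lemma convex_on_strict_epigraph:
  assumes "convex_on UNIV f"
  shows "convex {(x, t). f x < t}"
  unfolding convex_def
proof (clarsimp)
  fix x s y t and a b :: real
  assume fx: "f x < s" and fy: "f y < t" and "0 \<le> a" "0 \<le> b" "a + b = 1"
  have "f (a *\<^sub>R x + b *\<^sub>R y) \<le> a * f x + b * f y"
    using assms \<open>0 \<le> a\<close> \<open>0 \<le> b\<close> \<open>a + b = 1\<close> unfolding convex_on_def by auto
  also have "\<dots> < a * s + b * t"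
  proof (cases "a = 0")
    case True
    then show ?thesis using fy \<open>a + b = 1\<close> by simp
  next
    case False
    then have "a * f x < a * s" using fx \<open>0 \<le> a\<close> by simp
    moreover have "b * f y \<le> b * t" using fy \<open>0 \<le> b\<close> by (simp add: mult_left_mono)
    ultimately show ?thesis by simp
  qed
  finally show "f (a *\<^sub>R x + b *\<^sub>R y) < a * s + b * t" .
qed

lemma convex_on_subgradient:
  fixes f :: "'a::euclidean_space \<Rightarrow> real"
  assumes "convex_on UNIV f"
  shows "\<exists>m. \<forall>x. f a + m \<bullet> (x - a) \<le> f x"
proof -
  have "(a, f a + 1) \<in> {(x, t). f x < t}" by simp
  then obtain pq b where "pq \<noteq> 0" and sep_point: "pq \<bullet> (a, f a) \<le> b"
    and sep_epi: "\<forall>w\<in>{(x, t). f x < t}. b \<le> pq \<bullet> w"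
    using separating_hyperplane_sets[OF convex_singleton convex_on_strict_epigraph[OF assms],
        of "(a, f a)"]
    by fastforce
  obtain p q where "pq = (p, q)" by fastforce
  have below: "p \<bullet> a + q * f a \<le> b" using sep_point \<open>pq = (p, q)\<close> by simp
  have above: "b \<le> p \<bullet> x + q * t" if "f x < t" for x t
    using sep_epi that \<open>pq = (p, q)\<close> by auto
  have "0 \<le> q"
    using above[of a "f a + 1"] below by (simp add: algebra_simps)
  moreover have "q \<noteq> 0"
  proof
    assume "q = 0"
    then have "p \<noteq> 0" using \<open>pq \<noteq> 0\<close> \<open>pq = (p, q)\<close> by (simp add: zero_prod_def)
    have "b \<le> p \<bullet> (a - p)" using above[of "a - p" "f (a - p) + 1"] \<open>q = 0\<close> by simp
    then have "p \<bullet> p \<le> 0" using below \<open>q = 0\<close> by (simp add: inner_diff_right)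
    then show False using \<open>p \<noteq> 0\<close> inner_gt_zero_iff[of p] by linarith
  qed
  ultimately have "0 < q" by simp
  have support: "p \<bullet> a + q * f a \<le> p \<bullet> x + q * f x" for x
  proof (rule field_le_epsilon)
    fix e :: real assume "0 < e"
    have "b \<le> p \<bullet> x + q * (f x + e / q)" using above \<open>0 < e\<close> \<open>0 < q\<close> by simp
    also have "\<dots> = p \<bullet> x + q * f x + e" using \<open>0 < q\<close> by (simp add: field_simps)
    finally show "p \<bullet> a + q * f a \<le> p \<bullet> x + q * f x + e" using below by linarith
  qed
  have "f a + (- (1 / q)) *\<^sub>R p \<bullet> (x - a) \<le> f x" for x
    using support[of x] \<open>0 < q\<close> by (simp add: field_simps inner_diff_right)
  then show ?thesis by blast
qed

lemma subdiff_iff_rows: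
  "M \<in> subdiff g u \<longleftrightarrow> (\<forall>i w. g u $ i + M $ i \<bullet> (w - u) \<le> g w $ i)"
  by (auto simp: subdiff_def matrix_vector_mul_component algebra_simps)

lemma convex_map_subdiff_nonempty:
  assumes "convex_map g"
  obtains M where "M \<in> subdiff g a"
proof -
  have "\<forall>i. \<exists>m. \<forall>w. g a $ i + m \<bullet> (w - a) \<le> g w $ i"
    using convex_on_subgradient assms unfolding convex_map_def by blast
  then obtain m where "\<forall>i w. g a $ i + m i \<bullet> (w - a) \<le> g w $ i" by metis
  then have "(\<chi> i. m i) \<in> subdiff g a" by (simp add: subdiff_iff_rows)
  then show ?thesis by (rule that)
qed

lemma subdiff_stochastic:
  assumes "order_preserving g" and "additively_homogeneous g" and "M \<in> subdiff g a"
  shows "stochastic_on M UNIV"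
proof -
  have row: "g a $ i + M $ i \<bullet> (w - a) \<le> g w $ i" for i w
    using assms(3) by (simp add: subdiff_iff_rows)
  show ?thesis
    unfolding stochastic_on_def
  proof (intro conjI ballI)
    fix i j
    have "g (a - axis j 1) $ i \<le> g a $ i"
      using assms(1) unfolding order_preserving_def by (simp add: axis_def)
    then show "0 \<le> M $ i $ j" using row[of i "a - axis j 1"] by (simp add: inner_axis)
  next
    fix i
    have "M $ i \<bullet> ((\<chi> _. c) + a - a) = c * (\<Sum>j\<in>UNIV. M $ i $ j)" for c
      by (simp add: inner_vec_def sum_distrib_left mult.commute)
    moreover have "g ((\<chi> _. c) + a) $ i = c + g a $ i" for c
      using assms(2) unfolding additively_homogeneous_def by simp
    ultimately have "c * (\<Sum>j\<in>UNIV. M $ i $ j) \<le> c" for c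
      using row[of i "(\<chi> _. c) + a"] by simp
    from this[of 1] this[of "-1"] show "(\<Sum>j\<in>UNIV. M $ i $ j) = 1" by simp
  qed
qed

lemma stochastic_row_attains_bound:
  assumes "stochastic_on M UNIV" and "\<forall>j. z $ j \<le> c" and "c \<le> M $ i \<bullet> z"
  shows "M $ i \<bullet> z = c" and "M $ i $ j \<noteq> 0 \<Longrightarrow> z $ j = c"
proof -
  have nonneg: "0 \<le> M $ i $ k * (c - z $ k)" for k
    using assms(1,2) by (simp add: stochastic_on_def)
  have "c - M $ i \<bullet> z = (\<Sum>k\<in>UNIV. M $ i $ k * (c - z $ k))"
    using assms(1)
    by (simp add: stochastic_on_def inner_vec_def right_diff_distrib sum_subtractf
        sum_distrib_right[symmetric])
  moreover have "0 \<le> (\<Sum>k\<in>UNIV. M $ i $ k * (c - z $ k))" by (simp add: nonneg sum_nonneg)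
  ultimately have sum0: "(\<Sum>k\<in>UNIV. M $ i $ k * (c - z $ k)) = 0"
    using assms(3) by auto
  then show "M $ i \<bullet> z = c"
    using \<open>c - M $ i \<bullet> z = _\<close> by simp
  assume "M $ i $ j \<noteq> 0"
  moreover have "M $ i $ j * (c - z $ j) = 0"
    using sum0 sum_nonneg_eq_0_iff[of UNIV "\<lambda>k. M $ i $ k * (c - z $ k)"] nonneg by simp
  ultimately show "z $ j = c" by simp
qed

lemma closed_set_contains_recurrence_class:
  fixes M :: "real^'n^'n"
  assumes "stochastic_on M UNIV" and "S \<noteq> {}" and closed: "arcs M `` S \<subseteq> S"
  obtains F where "recurrence_class M F" and "F \<noteq> {}" and "F \<subseteq> S"
proof -
  define R where "R i = (arcs M)\<^sup>* `` {i}" for i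
  have RS: "R i \<subseteq> S" if "i \<in> S" for i
  proof
    fix j assume "j \<in> R i"
    then have "(i, j) \<in> (arcs M)\<^sup>*" by (simp add: R_def)
    then show "j \<in> S" by (induction rule: rtrancl_induct) (use that closed in auto)
  qed
  obtain i0 where "i0 \<in> S" and least: "\<And>i. i \<in> S \<Longrightarrow> card (R i0) \<le> card (R i)"
    using ex_has_least_nat[of "\<lambda>i. i \<in> S" _ "\<lambda>i. card (R i)"] \<open>S \<noteq> {}\<close> by blast
  \<comment> \<open>\<open>i0\<close> reaches the fewest nodes, so every node it reaches reaches it back\<close>
  have reaches_back: "(j, i0) \<in> (arcs M)\<^sup>*" if "j \<in> R i0" for j
  proof -
    have "R j \<subseteq> R i0" using that by (auto simp: R_def)
    moreover have "card (R i0) \<le> card (R j)" using least RS[OF \<open>i0 \<in> S\<close>] that by blast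
    ultimately have "R j = R i0" using card_subset_eq[of "R i0" "R j"] by (simp add: card_mono antisym)
    then show ?thesis unfolding R_def by (metis Image_singleton_iff rtrancl.rtrancl_refl)
  qed
  define F where "F = {j. (i0, j) \<in> (arcs M)\<^sup>* \<and> (j, i0) \<in> (arcs M)\<^sup>*}"
  have "F = R i0" using reaches_back unfolding F_def R_def by auto
  have final: "\<forall>i\<in>F. \<forall>j. (i, j) \<in> arcs M \<longrightarrow> j \<in> F"
    unfolding \<open>F = R i0\<close> R_def by auto
  have "stochastic_on M F"
    unfolding stochastic_on_def
  proof (intro conjI ballI)
    fix i j show "0 \<le> M $ i $ j" using assms(1) by (simp add: stochastic_on_def)
  next
    fix i assume "i \<in> F"
    have "(\<Sum>j\<in>F. M $ i $ j) = (\<Sum>j\<in>UNIV. M $ i $ j)"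
      by (rule sum.mono_neutral_left) (use final \<open>i \<in> F\<close> in \<open>auto simp: arcs_def\<close>)
    then show "(\<Sum>j\<in>F. M $ i $ j) = 1" using assms(1) by (simp add: stochastic_on_def)
  qed
  then have "recurrence_class M F"
    unfolding recurrence_class_def final_class_def comm_class_def using final F_def by blast
  moreover have "i0 \<in> F" by (simp add: F_def)
  moreover have "F \<subseteq> S" using \<open>F = R i0\<close> RS[OF \<open>i0 \<in> S\<close>] by simp
  ultimately show ?thesis using that by blast
qed

lemma closed_set_meets_critical_nodes:
  assumes "order_preserving g" and "additively_homogeneous g" and "M \<in> subdiff g u"
    and "S \<noteq> {}" and "arcs M `` S \<subseteq> S"
  shows "S \<inter> critical_nodes g u \<noteq> {}"
proof -
  obtain F where "recurrence_class M F" "F \<noteq> {}" "F \<subseteq> S"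
    using closed_set_contains_recurrence_class subdiff_stochastic assms by metis
  then show ?thesis using assms(3) unfolding critical_nodes_def by blast
qed

context
  fixes g :: "real^'n \<Rightarrow> real^'n" and u x :: "real^'n"
  assumes convex: "convex_map g" and op: "order_preserving g"
    and ah: "additively_homogeneous g" and harmonic: "g u = u"
    and agree_critical: "\<And>i. i \<in> critical_nodes g u \<Longrightarrow> x $ i = u $ i"
    and fixed_noncritical: "\<And>i. i \<notin> critical_nodes g u \<Longrightarrow> g x $ i = x $ i"
begin

lemma partial_fixed_point_le_harmonic: "x \<le> u"
proof (rule ccontr)
  define z where "z = x - u"
  define lam where "lam = Max (range (\<lambda>k. z $ k))"
  define S where "S = {k. z $ k = lam}"
  assume "\<not> x \<le> u"
  then have "\<exists>k. 0 < z $ k" by (auto simp: less_eq_vec_def z_def not_le)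
  then obtain k where "0 < z $ k" ..
  have z_le: "z $ k \<le> lam" for k unfolding lam_def by simp
  then have "0 < lam" using \<open>0 < z $ k\<close> order.strict_trans2 by blast
  have "lam \<in> range (\<lambda>k. z $ k)" unfolding lam_def by (intro Max_in) auto
  then have "S \<noteq> {}" by (auto simp: S_def)
  have noncritical: "k \<notin> critical_nodes g u" if "k \<in> S" for k
    using that agree_critical \<open>0 < lam\<close> by (fastforce simp: S_def z_def)
  obtain Mx where "Mx \<in> subdiff g x" using convex_map_subdiff_nonempty[OF convex] .
  obtain Mu where "Mu \<in> subdiff g u" using convex_map_subdiff_nonempty[OF convex] .
  have rows_x: "g x $ i + Mx $ i \<bullet> (w - x) \<le> g w $ i" for i w
    using \<open>Mx \<in> subdiff g x\<close> by (simp add: subdiff_iff_rows)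
  have gx: "g x $ i = u $ i + lam" if "i \<in> S" for i
    using fixed_noncritical[OF noncritical[OF that]] that by (simp add: S_def z_def)
  have lam_le: "lam \<le> Mx $ i \<bullet> z" if "i \<in> S" for i
    using rows_x[of i u] gx[OF that] harmonic by (simp add: z_def inner_diff_right)
  have avg: "Mx $ i \<bullet> z = lam" and support: "Mx $ i $ j \<noteq> 0 \<Longrightarrow> j \<in> S" if "i \<in> S" for i j
    using stochastic_row_attains_bound[OF subdiff_stochastic[OF op ah \<open>Mx \<in> subdiff g x\<close>]]
      z_le lam_le[OF that] by (auto simp: S_def)
  \<comment> \<open>on \<open>S\<close> the subgradient at \<open>x\<close> is also one at \<open>u\<close>\<close>
  define M where "M = (\<chi> i. if i \<in> S then Mx $ i else Mu $ i)"
  have "M \<in> subdiff g u"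
    unfolding subdiff_iff_rows
  proof (intro allI)
    fix i w
    show "g u $ i + M $ i \<bullet> (w - u) \<le> g w $ i"
    proof (cases "i \<in> S")
      case True
      show ?thesis using rows_x[of i w] gx[OF True] avg[OF True] harmonic True
        unfolding z_def by (simp add: M_def inner_diff_right)
    next
      case False
      then show ?thesis using \<open>Mu \<in> subdiff g u\<close> by (simp add: M_def subdiff_iff_rows)
    qed
  qed
  moreover have "arcs M `` S \<subseteq> S" using support by (auto simp: arcs_def M_def)
  ultimately show False
    using closed_set_meets_critical_nodes[OF op ah _ \<open>S \<noteq> {}\<close>] noncritical by blast
qed

lemma partial_fixed_point_ge_harmonic: "u \<le> x"
proof (rule ccontr)
  define z where "z = x - u"
  define mu where "mu = Min (range (\<lambda>k. z $ k))"
  define S where "S = {k. z $ k = mu}"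
  assume "\<not> u \<le> x"
  then have "\<exists>k. z $ k < 0" by (auto simp: less_eq_vec_def z_def not_le)
  then obtain k where "z $ k < 0" ..
  have z_ge: "mu \<le> z $ k" for k unfolding mu_def by simp
  then have "mu < 0" using \<open>z $ k < 0\<close> le_less_trans by blast
  have "mu \<in> range (\<lambda>k. z $ k)" unfolding mu_def by (intro Min_in) auto
  then have "S \<noteq> {}" by (auto simp: S_def)
  have noncritical: "k \<notin> critical_nodes g u" if "k \<in> S" for k
    using that agree_critical \<open>mu < 0\<close> by (fastforce simp: S_def z_def)
  obtain M where "M \<in> subdiff g u" using convex_map_subdiff_nonempty[OF convex] .
  have "z $ j = mu" if "i \<in> S" and "M $ i $ j \<noteq> 0" for i j
  proof -
    have "g u $ i + M $ i \<bullet> (x - u) \<le> g x $ i"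
      using \<open>M \<in> subdiff g u\<close> by (simp add: subdiff_iff_rows)
    moreover have "g x $ i = u $ i + mu"
      using fixed_noncritical[OF noncritical[OF \<open>i \<in> S\<close>]] \<open>i \<in> S\<close> by (simp add: S_def z_def)
    ultimately have "- mu \<le> M $ i \<bullet> (- z)" using harmonic by (simp add: z_def inner_diff_right)
    then have "(- z) $ j = - mu"
      using stochastic_row_attains_bound(2)[OF subdiff_stochastic[OF op ah \<open>M \<in> subdiff g u\<close>],
          of "- z" "- mu" i j]
        z_ge \<open>M $ i $ j \<noteq> 0\<close> by simp
    then show ?thesis by simp
  qed
  then have "arcs M `` S \<subseteq> S" by (auto simp: arcs_def S_def)
  then show False
    using closed_set_meets_critical_nodes[OF op ah \<open>M \<in> subdiff g u\<close> \<open>S \<noteq> {}\<close>] noncritical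
    by blast
qed

lemma partial_fixed_point_eq_harmonic: "x = u"
  using partial_fixed_point_le_harmonic partial_fixed_point_ge_harmonic by (rule antisym)

end

theorem lemma3p1:
  fixes g :: "real^'n \<Rightarrow> real^'n" and u :: "real^'n"
  assumes "convex_map g" and "order_preserving g" and "additively_homogeneous g"
    and "g u = u"
  defines "C \<equiv> critical_nodes g u"
  defines "N \<equiv> UNIV - C"
  defines "h \<equiv> (\<lambda>y. restrict (\<lambda>i. g (imath N y u) $ i) N)"
  shows "\<exists>!y. y \<in> N \<rightarrow>\<^sub>E (UNIV::real set) \<and> h y = y"
proof
  define y0 where "y0 = restrict (\<lambda>i. u $ i) N"
  have "imath N y0 u = u" by (simp add: imath_def y0_def vec_eq_iff)
  then show "y0 \<in> N \<rightarrow>\<^sub>E UNIV \<and> h y0 = y0"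
    using assms(4) by (simp add: h_def y0_def)
  fix y assume y: "y \<in> N \<rightarrow>\<^sub>E UNIV \<and> h y = y"
  have fixed: "imath N y u = u"
  proof (rule partial_fixed_point_eq_harmonic[OF assms(1-4)])
    show "imath N y u $ i = u $ i" if "i \<in> critical_nodes g u" for i
      using that by (simp add: imath_def N_def C_def)
    show "g (imath N y u) $ i = imath N y u $ i" if "i \<notin> critical_nodes g u" for i
    proof -
      have "i \<in> N" using that by (simp add: N_def C_def)
      then have "g (imath N y u) $ i = y i" using fun_cong[OF conjunct2[OF y], of i] by (simp add: h_def)
      also have "\<dots> = imath N y u $ i" using \<open>i \<in> N\<close> by (simp add: imath_def)
      finally show ?thesis .
    qed
  qed
  have "y i = u $ i" if "i \<in> N" for i
  proof -
    have "y i = imath N y u $ i" using that by (simp add: imath_def)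
    then show ?thesis by (simp add: fixed)
  qed
  then show "y = y0"
    using y by (intro PiE_ext[of _ N]) (auto simp: y0_def)
qed

end
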